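(* Consider a no-slip billiard in the upper half-plane $\{z\ge 0\}$ in which a disk-shaped particle of negligible (but nonzero) radius with rotationally symmetric mass distribution constant $\gamma\ge 0$ moves under a constant force $\mathbf g=(0,0,-g)$, $g>0$, between collisions and collides with the line $z=0$ according to the no-slip law. Let $\mathbf q_n=(x_n,y_n,z_n)$ and $\mathbf p_n=\dot{\mathbf q}_n$ be the position and velocity immediately after the $n$-th collision ($n=0,1,2,\dots$), with $y_0=0$, $z_0=0$ and $\dot z_0>0$, and suppose $\dot x_0\neq 0$. Define the tangential-rotational ratio $\Delta=\dot y_0/\dot x_0$. Then: (i) the post-collision velocities are $2$-periodic: $\mathbf p_{n+2}=\mathbf p_n$ for all $n\ge 0$; (ii) if $\Delta=\gamma$, the orbit in phase space is $2$-periodic: $(\mathbf q_{n+2},\mathbf p_{n+2})=(\mathbf q_n,\mathbf p_n)$ for all $n\ge 0$; (iii) if $\Delta\neq\gamma$, then after every two collisions the particle undergoes the same nonzero net lateral displacement (a constant drift), and the position is unbounded.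
   Context: State coordinates: $x$ is the normalized rotational coordinate $x=\gamma R\vartheta$ ($R$ the particle radius, $\vartheta$ the rotation angle in radians), $y$ is the coordinate along the boundary line, $z$ the height (inward normal direction). The mass distribution constant is $\gamma=\sqrt{2\lambda}/R$ where $\lambda$ is the second moment of inertia per unit mass ($\gamma=0$ point mass, $\gamma=1/\sqrt2$ uniform disk, $\gamma=1$ ring); with these coordinates the kinetic energy is proportional to $\dot x^2+\dot y^2+\dot z^2$. Write $\gamma=\tan(\beta/2)$. Between collisions the particle moves freely under the force ($\ddot x=\ddot y=0$, $\ddot z=-g$). At a collision with $z=0$ with incoming velocity $(\dot x,\dot y,\dot z)$, the no-slip collision law gives outgoing velocity $(-\cos\beta\,\dot x-\sin\beta\,\dot y,\; -\sin\beta\,\dot x+\cos\beta\,\dot y,\; -\dot z)$ (this fixes the relative orientation convention of the rotational and tangential coordinates). Position $\mathbf q_n$ includes the rotational coordinate $x_n$. *)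

theory Defs
  imports "HOL-Analysis.Analysis"
begin

type_synonym vec3 = "real \<times> real \<times> real"
type_synonym state = "vec3 \<times> vec3"   (* (position q, velocity p) *)

definition nsbeta :: "real \<Rightarrow> real" where
  "nsbeta \<gamma> = 2 * arctan \<gamma>"

(* no-slip collision law with the line z = 0 applied to the incoming velocity *)
definition nscoll :: "real \<Rightarrow> vec3 \<Rightarrow> vec3" where
  "nscoll \<gamma> v = (case v of (xd, yd, zd) \<Rightarrow>
     (- cos (nsbeta \<gamma>) * xd - sin (nsbeta \<gamma>) * yd,
      - sin (nsbeta \<gamma>) * xd + cos (nsbeta \<gamma>) * yd,
      - zd))"

(* time until the next collision with z = 0 under free motion
   x'' = y'' = 0, z'' = -g, from height z with vertical velocity zd:
   the positive root of z + zd t - g t^2/2 = 0 *)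
definition nsflight_time :: "real \<Rightarrow> real \<Rightarrow> real \<Rightarrow> real" where
  "nsflight_time g z zd = (zd + sqrt (zd\<^sup>2 + 2 * g * z)) / g"

definition nsbounce :: "real \<Rightarrow> real \<Rightarrow> state \<Rightarrow> state" where
  "nsbounce g \<gamma> s = (case s of ((x, y, z), (xd, yd, zd)) \<Rightarrow>
     (let t = nsflight_time g z zd in
       ((x + xd * t, y + yd * t, z + zd * t - g * t\<^sup>2 / 2),
        nscoll \<gamma> (xd, yd, zd - g * t))))"

(* (q_n, p_n): state immediately after the n-th collision *)
definition nsorbit :: "real \<Rightarrow> real \<Rightarrow> state \<Rightarrow> nat \<Rightarrow> state" where
  "nsorbit g \<gamma> s0 n = (nsbounce g \<gamma> ^^ n) s0"

end

theory Submission
  imports Defs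
begin

(* On the ground with vertical speed zd > 0 every flight lasts 2 zd / g and ends with
   vertical speed -zd, which the collision turns back into zd.  On the rotational and
   tangential components the collision acts as the reflection R in the line spanned by
   (-\<gamma>, 1), so the velocities alternate between p and R p.  As the dynamics commute with
   translations in x and y, two bounces translate the whole orbit by (2 zd / g) (p + R p),
   twice the projection of p onto the mirror line; this drift vanishes exactly when p is
   orthogonal to (-\<gamma>, 1), i.e. when yd = \<gamma> xd. *)

lemma not_bounded_range_drift:
  fixes u :: "nat \<Rightarrow> 'a :: real_normed_vector"
  assumes drift: "\<And>n. u (n + k) = u n + d" and "d \<noteq> 0"
  shows "\<not> bounded (range u)"
proof
  assume "bounded (range u)"
  then obtain B where B: "\<And>n. norm (u n) \<le> B"
    unfolding bounded_iff by blast
  have multiple: "u (m * k) = u 0 + real m *\<^sub>R d" for m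
  proof (induction m)
    case (Suc m)
    have "u (Suc m * k) = u (m * k) + d"
      using drift[of "m * k"] by (simp add: add.commute)
    with Suc show ?case
      by (simp add: algebra_simps)
  qed simp
  obtain m :: nat where m: "2 * B / norm d < real m"
    using reals_Archimedean2 by blast
  have "real m * norm d = norm (u (m * k) - u 0)"
    by (simp add: multiple)
  also have "\<dots> \<le> 2 * B"
    using norm_triangle_ineq4[of "u (m * k)" "u 0"] B[of "m * k"] B[of 0] by simp
  finally show False
    using m \<open>d \<noteq> 0\<close> by (simp add: field_simps)
qed

lemma cos_nsbeta: "cos (nsbeta \<gamma>) = (1 - \<gamma>\<^sup>2) / (1 + \<gamma>\<^sup>2)"
proof -
  have "(sqrt (1 + \<gamma>\<^sup>2))\<^sup>2 = 1 + \<gamma>\<^sup>2" by (simp add: add_pos_nonneg)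
  then show ?thesis
    unfolding nsbeta_def cos_double cos_arctan sin_arctan
    by (simp add: power_divide diff_divide_distrib)
qed

lemma sin_nsbeta: "sin (nsbeta \<gamma>) = 2 * \<gamma> / (1 + \<gamma>\<^sup>2)"
proof -
  have "(sqrt (1 + \<gamma>\<^sup>2))\<^sup>2 = 1 + \<gamma>\<^sup>2" by (simp add: add_pos_nonneg)
  then show ?thesis
    unfolding nsbeta_def sin_double cos_arctan sin_arctan
    by (simp add: power2_eq_square[symmetric])
qed

lemma nscoll_nscoll: "nscoll \<gamma> (nscoll \<gamma> v) = v"
proof -
  have cs: "(cos (nsbeta \<gamma>))\<^sup>2 + (sin (nsbeta \<gamma>))\<^sup>2 = 1" by simp
  obtain a b z where "v = (a, b, z)" by (cases v)
  moreover have "a * (cos (nsbeta \<gamma>))\<^sup>2 + a * (sin (nsbeta \<gamma>))\<^sup>2 = a"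
    and "b * (cos (nsbeta \<gamma>))\<^sup>2 + b * (sin (nsbeta \<gamma>))\<^sup>2 = b"
    using cs by (simp_all add: distrib_left[symmetric])
  ultimately show ?thesis
    by (simp add: nscoll_def algebra_simps power2_eq_square)
qed

lemma add_nscoll_self:
  "v + nscoll \<gamma> v = (2 * (fst (snd v) - \<gamma> * fst v) / (1 + \<gamma>\<^sup>2)) *\<^sub>R (- \<gamma>, 1, 0)"
proof -
  have denom: "1 + \<gamma>\<^sup>2 \<noteq> 0" using add_pos_nonneg[of 1 "\<gamma>\<^sup>2"] by simp
  obtain a b z where v: "v = (a, b, z)" by (cases v)
  have "a - (1 - \<gamma>\<^sup>2) / (1 + \<gamma>\<^sup>2) * a - 2 * \<gamma> / (1 + \<gamma>\<^sup>2) * b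
          = - \<gamma> * (2 * (b - \<gamma> * a) / (1 + \<gamma>\<^sup>2))"
    using denom by (simp add: divide_simps) (simp add: algebra_simps power2_eq_square)
  moreover have "b - 2 * \<gamma> / (1 + \<gamma>\<^sup>2) * a + (1 - \<gamma>\<^sup>2) / (1 + \<gamma>\<^sup>2) * b
          = 2 * (b - \<gamma> * a) / (1 + \<gamma>\<^sup>2)"
    using denom by (simp add: divide_simps) (simp add: algebra_simps power2_eq_square)
  ultimately show ?thesis
    by (simp add: v nscoll_def cos_nsbeta sin_nsbeta algebra_simps)
qed

lemma nsflight_time_ground: "zd \<ge> 0 \<Longrightarrow> nsflight_time g 0 zd = 2 * zd / g"
  by (simp add: nsflight_time_def)

lemma nsbounce_ground:
  assumes "g > 0" and "zd > 0"
  shows "nsbounce g \<gamma> ((x, y, 0), (a, b, zd)) =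
           ((x, y, 0) + (2 * zd / g) *\<^sub>R (a, b, 0), nscoll \<gamma> (a, b, - zd))"
proof -
  have "zd * (2 * zd / g) - g * (2 * zd / g)\<^sup>2 / 2 = 0" and "zd - g * (2 * zd / g) = - zd"
    using assms by (simp_all add: field_simps power2_eq_square)
  then show ?thesis
    using assms by (simp add: nsbounce_def nsflight_time_ground)
qed

definition nsdrift :: "real \<Rightarrow> real \<Rightarrow> vec3 \<Rightarrow> vec3" where
  "nsdrift g \<gamma> p = (2 * snd (snd p) / g) *\<^sub>R (p + nscoll \<gamma> p)"

lemma nsdrift_eq:
  "nsdrift g \<gamma> p =
     (4 * snd (snd p) * (fst (snd p) - \<gamma> * fst p) / (g * (1 + \<gamma>\<^sup>2))) *\<^sub>R (- \<gamma>, 1, 0)"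
  by (simp add: nsdrift_def add_nscoll_self)

lemma nsbounce_twice_ground:
  assumes "g > 0" and "zd > 0"
  shows "(nsbounce g \<gamma> ^^ 2) ((x, y, 0), (a, b, zd)) =
           ((x, y, 0) + nsdrift g \<gamma> (a, b, zd), (a, b, zd))"
proof -
  obtain a' b' where coll: "nscoll \<gamma> (a, b, zd) = (a', b', - zd)"
    by (simp add: nscoll_def)
  have up: "nscoll \<gamma> (a, b, - zd) = (a', b', zd)"
    and down: "nscoll \<gamma> (a', b', - zd) = (a, b, zd)"
    using coll nscoll_nscoll[of \<gamma> "(a, b, zd)"] by (auto simp: nscoll_def)
  show ?thesis
    using assms
    by (simp add: numeral_2_eq_2 nsbounce_ground up down nsdrift_def coll
        add_divide_distrib algebra_simps)
qed

lemma nsbounce_translate: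
  assumes "snd (snd d) = 0"
  shows "nsbounce g \<gamma> (q + d, p) = (fst (nsbounce g \<gamma> (q, p)) + d, snd (nsbounce g \<gamma> (q, p)))"
  using assms by (cases q, cases p, cases d) (simp add: nsbounce_def Let_def)

lemma funpow_nsbounce_translate:
  assumes "snd (snd d) = 0"
  shows "(nsbounce g \<gamma> ^^ n) (q + d, p) =
           (fst ((nsbounce g \<gamma> ^^ n) (q, p)) + d, snd ((nsbounce g \<gamma> ^^ n) (q, p)))"
proof (induction n)
  case 0
  show ?case by simp
next
  case (Suc n)
  then show ?case
    using nsbounce_translate[OF assms, of g \<gamma> "fst ((nsbounce g \<gamma> ^^ n) (q, p))"] by simp
qed

lemma nsorbit_add_2:
  assumes "g > 0" and "zd > 0"
  shows "nsorbit g \<gamma> ((x, y, 0), (a, b, zd)) (n + 2) =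
           (fst (nsorbit g \<gamma> ((x, y, 0), (a, b, zd)) n) + nsdrift g \<gamma> (a, b, zd),
            snd (nsorbit g \<gamma> ((x, y, 0), (a, b, zd)) n))"
proof -
  have "snd (snd (nsdrift g \<gamma> (a, b, zd))) = 0" by (simp add: nsdrift_eq)
  then show ?thesis
    unfolding nsorbit_def funpow_add comp_apply nsbounce_twice_ground[OF assms]
    by (rule funpow_nsbounce_translate)
qed

theorem theorem1:
  fixes g \<gamma> x0 xd0 yd0 zd0 :: real
  assumes "g > 0" and "\<gamma> \<ge> 0" and "zd0 > 0" and "xd0 \<noteq> 0"
  shows "(\<forall>n. snd (nsorbit g \<gamma> ((x0, 0, 0), (xd0, yd0, zd0)) (n + 2))
               = snd (nsorbit g \<gamma> ((x0, 0, 0), (xd0, yd0, zd0)) n))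
       \<and> (yd0 / xd0 = \<gamma> \<longrightarrow>
            (\<forall>n. nsorbit g \<gamma> ((x0, 0, 0), (xd0, yd0, zd0)) (n + 2)
                 = nsorbit g \<gamma> ((x0, 0, 0), (xd0, yd0, zd0)) n))
       \<and> (yd0 / xd0 \<noteq> \<gamma> \<longrightarrow>
            (\<exists>d :: vec3. fst (snd d) \<noteq> 0 \<and>
               (\<forall>n. fst (nsorbit g \<gamma> ((x0, 0, 0), (xd0, yd0, zd0)) (n + 2))
                    = fst (nsorbit g \<gamma> ((x0, 0, 0), (xd0, yd0, zd0)) n) + d))
            \<and> \<not> bounded (range (\<lambda>n. fst (nsorbit g \<gamma> ((x0, 0, 0), (xd0, yd0, zd0)) n))))"
proof -
  let ?O = "nsorbit g \<gamma> ((x0, 0, 0), (xd0, yd0, zd0))"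
  define d where "d = nsdrift g \<gamma> (xd0, yd0, zd0)"
  have period: "?O (n + 2) = (fst (?O n) + d, snd (?O n))" for n
    unfolding d_def using nsorbit_add_2[OF \<open>g > 0\<close> \<open>zd0 > 0\<close>] .
  have "g * (1 + \<gamma>\<^sup>2) > 0"
    using \<open>g > 0\<close> by (simp add: add_pos_nonneg)
  then have lateral: "fst (snd d) = 0 \<longleftrightarrow> yd0 / xd0 = \<gamma>"
    and drift_zero: "d = 0 \<longleftrightarrow> fst (snd d) = 0"
    using \<open>zd0 > 0\<close> \<open>xd0 \<noteq> 0\<close> by (auto simp: d_def nsdrift_eq field_simps zero_prod_def)
  show ?thesis
  proof (intro conjI impI)
    show "\<forall>n. snd (?O (n + 2)) = snd (?O n)"
      using period by simp
    show "\<forall>n. ?O (n + 2) = ?O n" if "yd0 / xd0 = \<gamma>"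
      using period that lateral drift_zero by simp
    assume "yd0 / xd0 \<noteq> \<gamma>"
    then have "fst (snd d) \<noteq> 0" and "d \<noteq> 0"
      using lateral drift_zero by simp_all
    then show "\<exists>d :: vec3. fst (snd d) \<noteq> 0 \<and> (\<forall>n. fst (?O (n + 2)) = fst (?O n) + d)"
      using period by (intro exI[of _ d]) simp
    show "\<not> bounded (range (\<lambda>n. fst (?O n)))"
      using period \<open>d \<noteq> 0\<close> by (intro not_bounded_range_drift[where k = 2 and d = d]) simp_all
  qed
qed

end
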